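(* Let $(\mathcal A,\varphi,\mathcal F,\Phi)$ be a ncps of type B$'$ with associated algebra $\mathcal B$ and functional $\varphi$ on $\mathcal B$. For $i\in I$ let $\mathcal A_i$ be a subalgebra of $\mathcal A$ containing $1_{\mathcal A}$, $\mathcal F_i$ a subalgebra of $\mathcal F$, and $\mathcal B_i=\mathcal A_i\langle\mathcal F_i\rangle=\mathcal A_i\oplus{}_{\mathcal A_i}\langle\mathcal F_i\rangle$. Let $P\in\mathcal F$ with $\Phi(P)\ne0$ and $\mathcal F_P:=\{cP^n:n\in\mathbb N,c\in\mathbb C\}$. Assume that $((\mathcal A_i)_{i\in I},(\mathcal F_i)_{i\in I\sqcup\{P\}})$ is weakly B$'$-free. Then for any $n\in\mathbb N$, $i_1,\dots,i_n\in I$ with $i_l\ne i_{l+1}$ for all $l$, and $b_j=a_j+F_j\in\mathcal B_{i_j}$ ($a_j\in\mathcal A_{i_j}$, $F_j\in{}_{\mathcal A_{i_j}}\langle\mathcal F_{i_j}\rangle$) with $\varphi(b_j)=0$ for $1\le j\le n$, $$\varphi_P(b_1b_2\cdots b_n)=\varphi_P(F_1F_2\cdots F_n).$$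
   Context: Ncps of type B$'$ $(\mathcal A,\varphi,\mathcal F,\Phi)$: $\mathcal A$ unital complex algebra, $\varphi(1_{\mathcal A})=1$, $\mathcal F$ an algebra which is an $\mathcal A$-bimodule compatible with its multiplication, $\Phi:\mathcal F\to\mathbb C$ linear. $\mathcal B=\mathcal A\oplus\mathcal F$ with product $(a_1,f_1)(a_2,f_2)=(a_1a_2,a_1f_2+f_1a_2+f_1f_2)$, unit $1_{\mathcal A}$; $\varphi(a+f):=\varphi(a)$. $\varphi_P(b):=\Phi(Pb)/\Phi(P)$. ${}_{\mathcal A_1}\langle\mathcal F_1\rangle$ denotes the span in $\mathcal F$ of all $a_0f_1a_1\cdots a_{n-1}f_na_n$ with $n\ge1$, $a_l\in\mathcal A_1$, $f_l\in\mathcal F_1$; $\mathcal A_1\langle\mathcal F_1\rangle=\mathcal A_1\oplus{}_{\mathcal A_1}\langle\mathcal F_1\rangle$ is the subalgebra of $\mathcal B$ generated by $\mathcal A_1\oplus\mathcal F_1$. Weak B$'$-freeness of $((\mathcal A_i)_{i\in I},(\mathcal F_j)_{j\in J})$: the $\mathcal A_i$ are free w.r.t. $\varphi$ ($\varphi(c_1\cdots c_n)=0$ for alternating indices and centered $c_l\in\mathcal A_{i_l}$), and with $\mathcal A_0$, $\mathcal F_0$ the algebras generated by all $\mathcal A_i$, resp. all $\mathcal F_j$, $\Phi(c_0g_1c_1\cdots c_{n-1}g_nc_n)=\varphi(c_0c_n)\prod_{l=1}^{n-1}\varphi(c_l)\Phi(g_1\cdots g_n)$ for $n\ge1$, $c_l\in\mathcal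 A_0$, $g_l\in\mathcal F_0$. *)

theory Defs
  imports Complex_Main
begin

(*   'a :: ring_1  is the carrier type of the unital algebra A,         *)
(*        with complex scalar multiplication sA                         *)
(*   'f :: ring    is the carrier type of the (possibly non-unital)     *)
(*        algebra F, with complex scalar multiplication sF              *)
(*   lm a f = a f  (left A-action),  rm f a = f a  (right A-action)     *)

definition complex_algebra :: "(complex \<Rightarrow> 'r::ring \<Rightarrow> 'r) \<Rightarrow> bool" where
  "complex_algebra s \<longleftrightarrow> vector_space s \<and>
     (\<forall>c x y. s c (x * y) = s c x * y \<and> s c (x * y) = x * s c y)"

definition ncps_B' ::
  "(complex \<Rightarrow> 'a::ring_1 \<Rightarrow> 'a) \<Rightarrow> ('a \<Rightarrow> complex) \<Rightarrow>
   (complex \<Rightarrow> 'f::ring \<Rightarrow> 'f) \<Rightarrow> ('a \<Rightarrow> 'f \<Rightarrow> 'f) \<Rightarrow> ('f \<Rightarrow> 'a \<Rightarrow> 'f) \<Rightarrow>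
   ('f \<Rightarrow> complex) \<Rightarrow> bool" where
  "ncps_B' sA \<phi> sF lm rm \<Phi> \<longleftrightarrow>
     complex_algebra sA \<and> complex_algebra sF \<and>
     Vector_Spaces.linear sA (*) \<phi> \<and> \<phi> 1 = 1 \<and>
     Vector_Spaces.linear sF (*) \<Phi> \<and>
     \<comment> \<open>A-bimodule structure on F\<close>
     (\<forall>a f g. lm a (f + g) = lm a f + lm a g) \<and>
     (\<forall>a b f. lm (a + b) f = lm a f + lm b f) \<and>
     (\<forall>c a f. lm (sA c a) f = sF c (lm a f) \<and> lm a (sF c f) = sF c (lm a f)) \<and>
     (\<forall>a f g. rm (f + g) a = rm f a + rm g a) \<and>
     (\<forall>a b f. rm f (a + b) = rm f a + rm f b) \<and>
     (\<forall>c a f. rm f (sA c a) = sF c (rm f a) \<and> rm (sF c f) a = sF c (rm f a)) \<and>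
     (\<forall>f. lm 1 f = f \<and> rm f 1 = f) \<and>
     (\<forall>a b f. lm (a * b) f = lm a (lm b f)) \<and>
     (\<forall>a b f. rm f (a * b) = rm (rm f a) b) \<and>
     (\<forall>a b f. lm a (rm f b) = rm (lm a f) b) \<and>
     \<comment> \<open>compatibility with the multiplication of F\<close>
     (\<forall>a f g. lm a (f * g) = lm a f * g) \<and>
     (\<forall>a f g. rm f a * g = f * lm a g) \<and>
     (\<forall>a f g. rm (f * g) a = f * rm g a)"

(* The algebra B = A \<oplus> F, elements are pairs (a, f) = a + f          *)

definition Bmult :: "('a::ring_1 \<Rightarrow> 'f::ring \<Rightarrow> 'f) \<Rightarrow> ('f \<Rightarrow> 'a \<Rightarrow> 'f) \<Rightarrow>
    'a \<times> 'f \<Rightarrow> 'a \<times> 'f \<Rightarrow> 'a \<times> 'f" where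
  "Bmult lm rm x y = (fst x * fst y, lm (fst x) (snd y) + rm (snd x) (fst y) + snd x * snd y)"

definition Bone :: "'a::ring_1 \<times> 'f::ring" where
  "Bone = (1, 0)"

definition Bprod :: "('a::ring_1 \<Rightarrow> 'f::ring \<Rightarrow> 'f) \<Rightarrow> ('f \<Rightarrow> 'a \<Rightarrow> 'f) \<Rightarrow>
    ('a \<times> 'f) list \<Rightarrow> 'a \<times> 'f" where
  "Bprod lm rm xs = foldr (Bmult lm rm) xs Bone"

definition phiB :: "('a \<Rightarrow> complex) \<Rightarrow> 'a \<times> 'f \<Rightarrow> complex" where
  "phiB \<phi> b = \<phi> (fst b)"

(* phi_P(b) = Phi(P b) / Phi(P);  P b = P a + P f  for b = a + f *)
definition phiP :: "('f::ring \<Rightarrow> 'a \<Rightarrow> 'f) \<Rightarrow> ('f \<Rightarrow> complex) \<Rightarrow> 'f \<Rightarrow> 'a \<times> 'f \<Rightarrow> complex" where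
  "phiP rm \<Phi> P b = \<Phi> (rm P (fst b) + P * snd b) / \<Phi> P"

definition unital_subalg :: "(complex \<Rightarrow> 'a::ring_1 \<Rightarrow> 'a) \<Rightarrow> 'a set \<Rightarrow> bool" where
  "unital_subalg sA S \<longleftrightarrow> 0 \<in> S \<and> 1 \<in> S \<and>
     (\<forall>x\<in>S. \<forall>y\<in>S. x + y \<in> S \<and> x * y \<in> S) \<and> (\<forall>c. \<forall>x\<in>S. sA c x \<in> S)"

definition subalg :: "(complex \<Rightarrow> 'f::ring \<Rightarrow> 'f) \<Rightarrow> 'f set \<Rightarrow> bool" where
  "subalg sF S \<longleftrightarrow> 0 \<in> S \<and>
     (\<forall>x\<in>S. \<forall>y\<in>S. x + y \<in> S \<and> x * y \<in> S) \<and> (\<forall>c. \<forall>x\<in>S. sF c x \<in> S)"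

definition gen_unital_subalg :: "(complex \<Rightarrow> 'a::ring_1 \<Rightarrow> 'a) \<Rightarrow> 'a set \<Rightarrow> 'a set" where
  "gen_unital_subalg sA X = \<Inter>{S. unital_subalg sA S \<and> X \<subseteq> S}"

definition gen_subalg :: "(complex \<Rightarrow> 'f::ring \<Rightarrow> 'f) \<Rightarrow> 'f set \<Rightarrow> 'f set" where
  "gen_subalg sF X = \<Inter>{S. subalg sF S \<and> X \<subseteq> S}"

(* Monomials  a_0 f_1 a_1 f_2 a_2 ... f_n a_n  in F  (n \<ge> 1)          *)
(* represented by a_0 and the list [(f_1,a_1), ..., (f_n,a_n)]         *)

fun mtail :: "('f::ring \<Rightarrow> 'a \<Rightarrow> 'f) \<Rightarrow> ('f \<times> 'a) list \<Rightarrow> 'f" where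
  "mtail rm [] = 0"
| "mtail rm [(f, a)] = rm f a"
| "mtail rm ((f, a) # rest) = rm f a * mtail rm rest"

definition monomial :: "('a \<Rightarrow> 'f::ring \<Rightarrow> 'f) \<Rightarrow> ('f \<Rightarrow> 'a \<Rightarrow> 'f) \<Rightarrow>
    'a \<Rightarrow> ('f \<times> 'a) list \<Rightarrow> 'f" where
  "monomial lm rm a0 xs = lm a0 (mtail rm xs)"

fun fprod :: "'f::ring list \<Rightarrow> 'f" where
  "fprod [] = 0"
| "fprod [f] = f"
| "fprod (f # fs) = f * fprod fs"

definition AF_span :: "(complex \<Rightarrow> 'f::ring \<Rightarrow> 'f) \<Rightarrow> ('a \<Rightarrow> 'f \<Rightarrow> 'f) \<Rightarrow> ('f \<Rightarrow> 'a \<Rightarrow> 'f) \<Rightarrow>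
    'a set \<Rightarrow> 'f set \<Rightarrow> 'f set" where
  "AF_span sF lm rm A1 F1 = module.span sF
     {monomial lm rm a0 xs | a0 xs. xs \<noteq> [] \<and> a0 \<in> A1 \<and> (\<forall>(f, a) \<in> set xs. f \<in> F1 \<and> a \<in> A1)}"

definition alternating :: "'i list \<Rightarrow> bool" where
  "alternating is \<longleftrightarrow> (\<forall>l. Suc l < length is \<longrightarrow> is ! l \<noteq> is ! Suc l)"

definition free_wrt :: "('a::ring_1 \<Rightarrow> complex) \<Rightarrow> 'i set \<Rightarrow> ('i \<Rightarrow> 'a set) \<Rightarrow> bool" where
  "free_wrt \<phi> I A \<longleftrightarrow>
     (\<forall>is cs. is \<noteq> [] \<and> set is \<subseteq> I \<and> alternating is \<and> length cs = length is \<and>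
        (\<forall>l < length is. cs ! l \<in> A (is ! l) \<and> \<phi> (cs ! l) = 0)
        \<longrightarrow> \<phi> (prod_list cs) = 0)"

definition weakly_B'_free ::
  "(complex \<Rightarrow> 'a::ring_1 \<Rightarrow> 'a) \<Rightarrow> ('a \<Rightarrow> complex) \<Rightarrow>
   (complex \<Rightarrow> 'f::ring \<Rightarrow> 'f) \<Rightarrow> ('a \<Rightarrow> 'f \<Rightarrow> 'f) \<Rightarrow> ('f \<Rightarrow> 'a \<Rightarrow> 'f) \<Rightarrow>
   ('f \<Rightarrow> complex) \<Rightarrow> 'i set \<Rightarrow> ('i \<Rightarrow> 'a set) \<Rightarrow> 'j set \<Rightarrow> ('j \<Rightarrow> 'f set) \<Rightarrow> bool" where
  "weakly_B'_free sA \<phi> sF lm rm \<Phi> I A J F \<longleftrightarrow>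
     free_wrt \<phi> I A \<and>
     (let A0 = gen_unital_subalg sA (\<Union>i\<in>I. A i);
          F0 = gen_subalg sF (\<Union>j\<in>J. F j)
      in \<forall>n c g. n \<ge> 1 \<and> (\<forall>l\<le>n. c l \<in> A0) \<and> (\<forall>l\<in>{1..n}. g l \<in> F0) \<longrightarrow>
           \<Phi> (monomial lm rm (c 0) (map (\<lambda>l. (g l, c l)) [1..<Suc n]))
             = \<phi> (c 0 * c n) * (\<Prod>l\<in>{1..<n}. \<phi> (c l)) * \<Phi> (fprod (map g [1..<Suc n])))"

(* F_P = { c P^n : n \<in> \<nat>, c \<in> \<complex> }, with \<nat> = {1,2,...} (F need not be unital) *)
fun fpow :: "'f::ring \<Rightarrow> nat \<Rightarrow> 'f" where
  "fpow P 0 = 0"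
| "fpow P (Suc 0) = P"
| "fpow P (Suc n) = P * fpow P n"

definition FP :: "(complex \<Rightarrow> 'f::ring \<Rightarrow> 'f) \<Rightarrow> 'f \<Rightarrow> 'f set" where
  "FP sF P = {sF c (fpow P n) | c n. n \<ge> 1}"

end

(*
  Expanding every b_j = a_j + F_j, each term other than P F_1 ... F_n contains some a_j.
  Such a term is a monomial c_0 g_1 c_1 ... g_m c_m (c_0 = 1, the g_l in the F_i or equal
  to P) one of whose coefficients has the form c a_j a_(j+1) ... a_k d: an alternating
  product of centered a's, padded by 1 or by elements of algebras different from the
  neighbouring ones. Freeness of the A_i makes its phi vanish, and weak B'-freeness turns
  this into Phi = 0 for the whole monomial.

  Instead of expanding, the b_j are absorbed one at a time into a left factor L,
  starting from L = P. The invariant is that L lies in the span of monomials whose last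
  coefficient annihilates, in the above sense, every centered alternating word that
  starts in the algebra of the next letter.
*)
theory Submission
  imports Defs
begin

lemma alternating_eq_distinct_adj: "alternating = distinct_adj"
  by (auto simp: fun_eq_iff alternating_def distinct_adj_conv_nth)

context module
begin

lemma span_map_in_span:
  assumes "x \<in> span S" and "\<And>s. s \<in> S \<Longrightarrow> f s \<in> span T"
    and "\<And>x y. f (x + y) = f x + f y" and "\<And>c x. f (c *s x) = c *s f x"
  shows "f x \<in> span T"
  using assms(1)
proof (induction rule: span_induct_alt)
  case base
  have "f 0 = 0" using assms(3)[of 0 0] by simp
  then show ?case by (simp add: span_zero)
next
  case (step c x y)
  then show ?case by (simp add: assms(2-4) span_add span_scale)
qed

lemma functional_eq_0_on_span:
  assumes "x \<in> span S" and "\<And>s. s \<in> S \<Longrightarrow> h s = 0"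
    and "\<And>x y. h (x + y) = h x + h y" and "\<And>c x. h (c *s x) = c * h x"
  shows "h x = 0"
  using assms(1)
proof (induction rule: span_induct_alt)
  case base
  show ?case using assms(3)[of 0 0] by simp
next
  case (step c x y)
  then show ?case by (simp add: assms(2-4))
qed

end

lemma mtail_Cons: "xs \<noteq> [] \<Longrightarrow> mtail rm ((f, a) # xs) = rm f a * mtail rm xs"
  by (cases xs) auto

lemma Bprod_Cons: "Bprod lm rm (x # xs) = Bmult lm rm x (Bprod lm rm xs)"
  by (simp add: Bprod_def)

locale ncps =
  fixes sA :: "complex \<Rightarrow> 'a::ring_1 \<Rightarrow> 'a"
    and sF :: "complex \<Rightarrow> 'f::ring \<Rightarrow> 'f"
    and \<phi> :: "'a \<Rightarrow> complex" and \<Phi> :: "'f \<Rightarrow> complex"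
    and lm :: "'a \<Rightarrow> 'f \<Rightarrow> 'f" and rm :: "'f \<Rightarrow> 'a \<Rightarrow> 'f"
  assumes ncps_B': "ncps_B' sA \<phi> sF lm rm \<Phi>"
begin

lemma
  shows vector_space_A: "vector_space sA"
    and vector_space_F: "vector_space sF"
    and sA_mult_left: "sA c (x * y) = sA c x * y"
    and sA_mult_right: "sA c (x * y) = x * sA c y"
    and sF_mult_left: "sF c (f * g) = sF c f * g"
    and sF_mult_right: "sF c (f * g) = f * sF c g"
    and linear_phi: "Vector_Spaces.linear sA (*) \<phi>"
    and phi_one: "\<phi> 1 = 1"
    and linear_Phi: "Vector_Spaces.linear sF (*) \<Phi>"
    and lm_add_left: "lm (a + b) f = lm a f + lm b f"
    and rm_add_left: "rm (f + g) a = rm f a + rm g a"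
    and rm_add_right: "rm f (a + b) = rm f a + rm f b"
    and rm_scale: "rm (sF c f) a = sF c (rm f a)"
    and lm_one: "lm 1 f = f"
    and rm_one: "rm f 1 = f"
    and lm_mult: "lm (a * b) f = lm a (lm b f)"
    and rm_mult: "rm f (a * b) = rm (rm f a) b"
    and lm_rm: "lm a (rm f b) = rm (lm a f) b"
    and lm_mult_F: "lm a (f * g) = lm a f * g"
    and rm_mult_lm: "rm f a * g = f * lm a g"
    and rm_mult_F: "rm (f * g) a = f * rm g a"
  by (insert ncps_B', unfold ncps_B'_def complex_algebra_def, elim conjE, metis)+

sublocale A_vs: vector_space sA by (fact vector_space_A)
sublocale F_vs: vector_space sF by (fact vector_space_F)

lemma phi_add: "\<phi> (x + y) = \<phi> x + \<phi> y"
  and phi_scale: "\<phi> (sA c x) = c * \<phi> x"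
  using linear_phi by (simp_all add: Vector_Spaces.linear_iff)

lemma Phi_add: "\<Phi> (f + g) = \<Phi> f + \<Phi> g"
  and Phi_scale: "\<Phi> (sF c f) = c * \<Phi> f"
  using linear_Phi by (simp_all add: Vector_Spaces.linear_iff)

lemma lm_zero_left: "lm 0 f = 0"
  using lm_add_left[of 0 0 f] by simp

lemma rm_zero_right: "rm f 0 = 0"
  using rm_add_right[of f 0 0] by simp

lemma phi_sA_one_mult: "\<phi> (sA c 1 * x) = c * \<phi> x"
  by (metis mult_1_left phi_scale sA_mult_left)

lemma phi_mult_sA_one: "\<phi> (x * sA c 1) = c * \<phi> x"
  by (metis mult_1_right phi_scale sA_mult_right)

lemma phi_centered: "\<phi> (u - sA (\<phi> u) 1) = 0"
proof -
  have "\<phi> (u - sA (\<phi> u) 1) = \<phi> (u + sA (- \<phi> u) 1)"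
    by (simp add: A_vs.scale_minus_left)
  also have "\<dots> = 0"
    by (simp only: phi_add phi_scale phi_one) simp
  finally show ?thesis .
qed

lemma phi_mult_centered_right: "\<phi> (x * v) = \<phi> v * \<phi> x + \<phi> (x * (v - sA (\<phi> v) 1))"
proof -
  have "\<phi> (x * v) = \<phi> (x * sA (\<phi> v) 1 + x * (v - sA (\<phi> v) 1))"
    by (simp add: algebra_simps)
  then show ?thesis by (simp add: phi_add phi_mult_sA_one)
qed

lemma phi_mult_centered_left: "\<phi> (u * x) = \<phi> u * \<phi> x + \<phi> ((u - sA (\<phi> u) 1) * x)"
proof -
  have "\<phi> (u * x) = \<phi> (sA (\<phi> u) 1 * x + (u - sA (\<phi> u) 1) * x)"
    by (simp add: algebra_simps)
  then show ?thesis by (simp add: phi_add phi_sA_one_mult)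
qed

lemma span_mult:
  assumes "f \<in> F_vs.span S" "g \<in> F_vs.span T"
    and "\<And>s t. s \<in> S \<Longrightarrow> t \<in> T \<Longrightarrow> s * t \<in> F_vs.span U"
  shows "f * g \<in> F_vs.span U"
proof -
  have "s * g \<in> F_vs.span U" if "s \<in> S" for s
    by (rule F_vs.span_map_in_span[OF assms(2), of "\<lambda>g. s * g"])
      (simp_all add: assms(3) that distrib_left sF_mult_right)
  then show ?thesis
    by (rule F_vs.span_map_in_span[OF assms(1), of "\<lambda>f. f * g"])
      (simp_all add: distrib_right sF_mult_left)
qed

lemma rm_mtail_snoc: "rm (mtail rm (xs @ [(g, c)])) a = mtail rm (xs @ [(g, c * a)])"
proof (induction xs)
  case Nil
  then show ?case by (simp add: rm_mult)
next
  case (Cons p xs)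
  then show ?case by (cases p) (simp add: mtail_Cons rm_mult_F)
qed

lemma mtail_snoc_mult_lm: "mtail rm (xs @ [(g, c)]) * lm d h = mtail rm (xs @ [(g, c * d)]) * h"
proof (induction xs)
  case Nil
  then show ?case by (simp add: rm_mult_lm lm_mult)
next
  case (Cons p xs)
  then show ?case by (cases p) (simp add: mtail_Cons mult.assoc)
qed

lemma mtail_append:
  "xs \<noteq> [] \<Longrightarrow> ys \<noteq> [] \<Longrightarrow> mtail rm (xs @ ys) = mtail rm xs * mtail rm ys"
proof (induction xs)
  case Nil
  then show ?case by simp
next
  case (Cons p xs)
  then show ?case by (cases p; cases "xs = []") (simp_all add: mtail_Cons mult.assoc)
qed

lemma rm_monomial_snoc:
  "rm (monomial lm rm d (xs @ [(g, c)])) a = monomial lm rm d (xs @ [(g, c * a)])"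
  by (simp add: monomial_def lm_rm[symmetric] rm_mtail_snoc)

lemma monomial_snoc_mult:
  "ys \<noteq> [] \<Longrightarrow> monomial lm rm d (xs @ [(g, c)]) * monomial lm rm d' ys
     = monomial lm rm d (xs @ [(g, c * d')] @ ys)"
  by (simp add: monomial_def lm_mult_F[symmetric] mtail_snoc_mult_lm mtail_append[symmetric])

definition rmul_B :: "'f \<Rightarrow> 'a \<times> 'f \<Rightarrow> 'f" where
  "rmul_B f b = rm f (fst b) + f * snd b"

lemma phiP_eq: "phiP rm \<Phi> P b = \<Phi> (rmul_B P b) / \<Phi> P"
  by (simp add: phiP_def rmul_B_def)

lemma rmul_B_Pair: "rmul_B f (a, g) = rm f a + f * g"
  by (simp add: rmul_B_def)

lemma rmul_B_Bmult: "rmul_B f (Bmult lm rm x y) = rmul_B (rmul_B f x) y"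
  by (simp add: rmul_B_def Bmult_def rm_mult rm_add_left rm_mult_lm rm_mult_F
      distrib_left distrib_right mult.assoc add_ac)

lemma rmul_B_add: "rmul_B (f + g) b = rmul_B f b + rmul_B g b"
  by (simp add: rmul_B_def rm_add_left distrib_right add_ac)

lemma rmul_B_Bone: "rmul_B f Bone = f"
  by (simp add: rmul_B_def Bone_def rm_one)

end

locale ncps_weakly_free = ncps sA sF \<phi> \<Phi> lm rm
  for sA :: "complex \<Rightarrow> 'a::ring_1 \<Rightarrow> 'a" and sF :: "complex \<Rightarrow> 'f::ring \<Rightarrow> 'f"
    and \<phi> :: "'a \<Rightarrow> complex" and \<Phi> :: "'f \<Rightarrow> complex"
    and lm :: "'a \<Rightarrow> 'f \<Rightarrow> 'f" and rm :: "'f \<Rightarrow> 'a \<Rightarrow> 'f" +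
  fixes I :: "'i set" and A :: "'i \<Rightarrow> 'a set"
    and J :: "'j set" and G :: "'j \<Rightarrow> 'f set"
    and F :: "'i \<Rightarrow> 'f set"
  assumes unital_subalg_A: "i \<in> I \<Longrightarrow> unital_subalg sA (A i)"
    and weakly_free: "weakly_B'_free sA \<phi> sF lm rm \<Phi> I A J G"
    and F_subset: "i \<in> I \<Longrightarrow> F i \<subseteq> gen_subalg sF (\<Union>j\<in>J. G j)"
begin

definition A0 :: "'a set" where
  "A0 = gen_unital_subalg sA (\<Union>i\<in>I. A i)"

definition F0 :: "'f set" where
  "F0 = gen_subalg sF (\<Union>j\<in>J. G j)"

lemma A_subset_A0: "i \<in> I \<Longrightarrow> A i \<subseteq> A0"
  unfolding A0_def gen_unital_subalg_def by blast

lemma one_in_A0: "1 \<in> A0"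
  unfolding A0_def gen_unital_subalg_def unital_subalg_def by blast

lemma mult_in_A0: "x \<in> A0 \<Longrightarrow> y \<in> A0 \<Longrightarrow> x * y \<in> A0"
  unfolding A0_def gen_unital_subalg_def unital_subalg_def by blast

lemma F_subset_F0: "i \<in> I \<Longrightarrow> F i \<subseteq> F0"
  unfolding F0_def by (rule F_subset)

lemma G_subset_F0: "j \<in> J \<Longrightarrow> G j \<subseteq> F0"
  unfolding F0_def gen_subalg_def by blast

lemma centered_in_A:
  assumes "i \<in> I" "u \<in> A i"
  shows "u - sA (\<phi> u) 1 \<in> A i"
proof -
  have "sA (- \<phi> u) 1 \<in> A i" "\<forall>x\<in>A i. \<forall>y\<in>A i. x + y \<in> A i"
    using unital_subalg_A[OF assms(1)] unfolding unital_subalg_def by blast+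
  then show ?thesis using assms(2) by (metis A_vs.scale_minus_left diff_conv_add_uminus)
qed

definition centered_word :: "'i list \<Rightarrow> 'a list \<Rightarrow> bool" where
  "centered_word ks cs \<longleftrightarrow> ks \<noteq> [] \<and> set ks \<subseteq> I \<and> distinct_adj ks \<and>
     list_all2 (\<lambda>k c. c \<in> A k \<and> \<phi> c = 0) ks cs"

lemma phi_centered_word: "centered_word ks cs \<Longrightarrow> \<phi> (prod_list cs) = 0"
  using weakly_free[unfolded weakly_B'_free_def free_wrt_def, THEN conjunct1, rule_format, of ks cs]
  by (auto simp: centered_word_def alternating_eq_distinct_adj list_all2_conv_all_nth)

lemma centered_word_extend_right:
  assumes "centered_word ks cs" "z = 1 \<or> (\<exists>j\<in>I. j \<noteq> last ks \<and> z \<in> A j \<and> \<phi> z = 0)"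
  obtains ks' cs' where "centered_word ks' cs'" "hd ks' = hd ks" "prod_list cs' = prod_list cs * z"
  using assms(2)
proof
  assume "z = 1"
  then show ?thesis using that[OF assms(1)] by simp
next
  assume "\<exists>j\<in>I. j \<noteq> last ks \<and> z \<in> A j \<and> \<phi> z = 0"
  then obtain j where "j \<in> I" "j \<noteq> last ks" "z \<in> A j" "\<phi> z = 0" by blast
  with assms(1) have "centered_word (ks @ [j]) (cs @ [z])"
    by (auto simp: centered_word_def distinct_adj_append_iff intro: list_all2_appendI)
  then show ?thesis by (rule that) (use assms(1) in \<open>auto simp: centered_word_def\<close>)
qed

lemma centered_word_extend_left:
  assumes "centered_word ks cs" "w = 1 \<or> (\<exists>j\<in>I. j \<noteq> hd ks \<and> w \<in> A j \<and> \<phi> w = 0)"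
  obtains ks' cs' where "centered_word ks' cs'" "prod_list cs' = w * prod_list cs"
  using assms(2)
proof
  assume "w = 1"
  then show ?thesis using that[OF assms(1)] by simp
next
  assume "\<exists>j\<in>I. j \<noteq> hd ks \<and> w \<in> A j \<and> \<phi> w = 0"
  then obtain j where "j \<in> I" "j \<noteq> hd ks" "w \<in> A j" "\<phi> w = 0" by blast
  with assms(1) have "centered_word (j # ks) (w # cs)"
    by (auto simp: centered_word_def distinct_adj_Cons)
  then show ?thesis using that by simp
qed

lemma phi_centered_word_centered_ends:
  assumes "centered_word ks cs"
    and "w = 1 \<or> (\<exists>j\<in>I. j \<noteq> hd ks \<and> w \<in> A j \<and> \<phi> w = 0)"
    and "z = 1 \<or> (\<exists>j\<in>I. j \<noteq> last ks \<and> z \<in> A j \<and> \<phi> z = 0)"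
  shows "\<phi> (w * prod_list cs * z) = 0"
proof -
  obtain ks' cs' where cs': "centered_word ks' cs'" "hd ks' = hd ks"
    "prod_list cs' = prod_list cs * z"
    using centered_word_extend_right[OF assms(1,3)] .
  obtain ks'' cs'' where "centered_word ks'' cs''" "prod_list cs'' = w * prod_list cs'"
    using centered_word_extend_left[OF cs'(1)] assms(2) unfolding cs'(2) .
  then show ?thesis using cs'(3) phi_centered_word by (metis mult.assoc)
qed

definition apart_from :: "'i \<Rightarrow> 'a \<Rightarrow> bool" where
  "apart_from k u \<longleftrightarrow> u = 1 \<or> (\<exists>j\<in>I. j \<noteq> k \<and> u \<in> A j)"

lemma phi_centered_word_apart_ends:
  assumes word: "centered_word ks cs"
    and u: "apart_from (hd ks) u" and v: "apart_from (last ks) v"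
  shows "\<phi> (u * prod_list cs * v) = 0"
proof -
  have right: "\<phi> (w * prod_list cs * v) = 0"
    if w: "w = 1 \<or> (\<exists>j\<in>I. j \<noteq> hd ks \<and> w \<in> A j \<and> \<phi> w = 0)" for w
  proof (cases "v = 1")
    case True
    then show ?thesis using phi_centered_word_centered_ends[OF word w, of 1] by simp
  next
    case False
    then obtain j where "j \<in> I" "j \<noteq> last ks" "v \<in> A j"
      using v unfolding apart_from_def by blast
    then have "\<exists>j\<in>I. j \<noteq> last ks \<and> v - sA (\<phi> v) 1 \<in> A j \<and> \<phi> (v - sA (\<phi> v) 1) = 0"
      using centered_in_A phi_centered by blast
    then show ?thesis
      using phi_centered_word_centered_ends[OF word w, of 1]
        phi_centered_word_centered_ends[OF word w, of "v - sA (\<phi> v) 1"]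
      by (simp add: phi_mult_centered_right[of "w * prod_list cs" v])
  qed
  show ?thesis
  proof (cases "u = 1")
    case True
    then show ?thesis using right[of 1] by simp
  next
    case False
    then obtain j where "j \<in> I" "j \<noteq> hd ks" "u \<in> A j"
      using u unfolding apart_from_def by blast
    then have "\<exists>j\<in>I. j \<noteq> hd ks \<and> u - sA (\<phi> u) 1 \<in> A j \<and> \<phi> (u - sA (\<phi> u) 1) = 0"
      using centered_in_A phi_centered by blast
    then show ?thesis
      using right[of 1] right[of "u - sA (\<phi> u) 1"]
      by (simp add: phi_mult_centered_left[of u "prod_list cs * v"] mult.assoc)
  qed
qed

definition annihilates :: "'i \<Rightarrow> 'a \<Rightarrow> bool" where
  "annihilates i u \<longleftrightarrow> (\<forall>ks cs v. centered_word ks cs \<and> hd ks = i \<and> apart_from (last ks) v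
     \<longrightarrow> \<phi> (u * prod_list cs * v) = 0)"

lemma annihilates_if_apart_from: "apart_from i u \<Longrightarrow> annihilates i u"
  unfolding annihilates_def using phi_centered_word_apart_ends by blast

lemma annihilates_mult:
  assumes "annihilates i u" "i \<in> I" "a \<in> A i" "\<phi> a = 0" "i' \<noteq> i"
  shows "annihilates i' (u * a)"
  unfolding annihilates_def
proof (intro allI impI, elim conjE)
  fix ks cs v
  assume "centered_word ks cs" "hd ks = i'" "apart_from (last ks) v"
  with assms have "centered_word (i # ks) (a # cs)" "apart_from (last (i # ks)) v"
    by (auto simp: centered_word_def distinct_adj_Cons)
  then have "\<phi> (u * prod_list (a # cs) * v) = 0"
    using assms(1) unfolding annihilates_def by fastforce
  then show "\<phi> (u * a * prod_list cs * v) = 0" by (simp add: mult.assoc)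
qed

lemma annihilates_phi_eq_0:
  assumes "annihilates i u" "i \<in> I" "a \<in> A i" "\<phi> a = 0" "apart_from i v"
  shows "\<phi> (u * a * v) = 0"
proof -
  have "centered_word [i] [a]" using assms(2-4) by (simp add: centered_word_def)
  then have "\<phi> (u * prod_list [a] * v) = 0"
    using assms(1,5) unfolding annihilates_def by fastforce
  then show ?thesis by simp
qed

lemma Phi_monomial_factorizes:
  assumes "1 \<le> n" "\<And>l. l \<le> n \<Longrightarrow> c l \<in> A0" "\<And>l. l \<in> {1..n} \<Longrightarrow> g l \<in> F0"
  shows "\<Phi> (monomial lm rm (c 0) (map (\<lambda>l. (g l, c l)) [1..<Suc n]))
    = \<phi> (c 0 * c n) * (\<Prod>l\<in>{1..<n}. \<phi> (c l)) * \<Phi> (fprod (map g [1..<Suc n]))"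
  by (rule weakly_free[unfolded weakly_B'_free_def Let_def, THEN conjunct2, rule_format, of n c g])
    (use assms in \<open>auto simp: A0_def F0_def\<close>)

lemma Phi_monomial_eq_0:
  assumes xs: "xs \<noteq> []" "set xs \<subseteq> F0 \<times> A0"
    and l: "l < length xs" "\<phi> (snd (xs ! l)) = 0"
  shows "\<Phi> (monomial lm rm 1 xs) = 0"
proof -
  define n where "n = length xs"
  define c where "c k = (if k = 0 then 1 else snd (xs ! (k - 1)))" for k
  define g where "g k = fst (xs ! (k - 1))" for k
  have "[1..<Suc n] = map Suc [0..<n]" by (simp add: map_Suc_upt)
  then have "map (\<lambda>k. (g k, c k)) [1..<Suc n] = map (\<lambda>k. xs ! k) [0..<n]"
    by (simp add: g_def c_def)
  also have "\<dots> = xs" by (simp add: n_def map_nth)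
  finally have xs_eq: "map (\<lambda>k. (g k, c k)) [1..<Suc n] = xs" .
  have "c k \<in> A0" if "k \<le> n" for k
  proof (cases "k = 0")
    case False
    then have "xs ! (k - 1) \<in> set xs" using that by (simp add: n_def)
    then show ?thesis using xs(2) False by (auto simp: c_def)
  qed (simp add: c_def one_in_A0)
  moreover have "g k \<in> F0" if "k \<in> {1..n}" for k
  proof -
    have "xs ! (k - 1) \<in> set xs" using that by (auto simp: n_def)
    then show ?thesis using xs(2) by (auto simp: g_def)
  qed
  moreover have "1 \<le> n" using xs(1) by (simp add: n_def Suc_le_eq)
  ultimately have "\<Phi> (monomial lm rm 1 xs)
      = \<phi> (c 0 * c n) * (\<Prod>k\<in>{1..<n}. \<phi> (c k)) * \<Phi> (fprod (map g [1..<Suc n]))"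
    using Phi_monomial_factorizes[of n c g] xs_eq by (simp add: c_def)
  moreover have "\<phi> (c 0 * c n) = 0 \<or> (\<Prod>k\<in>{1..<n}. \<phi> (c k)) = 0"
  proof (cases "Suc l = n")
    case True
    then show ?thesis using l(2) by (auto simp: c_def)
  next
    case False
    then have "Suc l \<in> {1..<n}" "\<phi> (c (Suc l)) = 0" using l by (simp_all add: n_def c_def)
    then show ?thesis by (metis finite_atLeastLessThan prod_zero_iff)
  qed
  ultimately show ?thesis by auto
qed

(* Leading coefficient 1, as for P: then the factor phi (c_0 c_n) of the weak B'-freeness
   formula is phi c_n, which the annihilation property of c_n controls. *)
definition left_factors :: "'i \<Rightarrow> 'f set" where
  "left_factors i = {monomial lm rm 1 xs | xs.
     xs \<noteq> [] \<and> set xs \<subseteq> F0 \<times> A0 \<and> annihilates i (snd (last xs))}"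

definition headed_monomials :: "'i \<Rightarrow> 'f set" where
  "headed_monomials i = {monomial lm rm d xs | d xs. xs \<noteq> [] \<and> set xs \<subseteq> F0 \<times> A0 \<and> d \<in> A i}"

lemma left_factorsE:
  assumes "s \<in> left_factors i"
  obtains xs g c where "s = monomial lm rm 1 (xs @ [(g, c)])" "set xs \<subseteq> F0 \<times> A0"
    "g \<in> F0" "c \<in> A0" "annihilates i c"
proof -
  obtain ys where ys: "s = monomial lm rm 1 ys" "ys \<noteq> []" "set ys \<subseteq> F0 \<times> A0"
    "annihilates i (snd (last ys))"
    using assms unfolding left_factors_def by blast
  then obtain xs g c where "ys = xs @ [(g, c)]" by (metis rev_exhaust surj_pair)
  with ys that show ?thesis by simp
qed

lemma headed_monomialsE:
  assumes "t \<in> headed_monomials i"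
  obtains d xs where "t = monomial lm rm d xs" "xs \<noteq> []" "set xs \<subseteq> F0 \<times> A0" "d \<in> A i"
  using assms unfolding headed_monomials_def by blast

lemma headed_monomials_mult:
  assumes "s \<in> headed_monomials i" "t \<in> headed_monomials i'" "i' \<in> I"
  shows "s * t \<in> headed_monomials i"
proof -
  obtain d ys where s: "s = monomial lm rm d ys" "ys \<noteq> []" "set ys \<subseteq> F0 \<times> A0" "d \<in> A i"
    using assms(1) by (rule headed_monomialsE)
  obtain d' zs where t: "t = monomial lm rm d' zs" "zs \<noteq> []" "set zs \<subseteq> F0 \<times> A0" "d' \<in> A i'"
    using assms(2) by (rule headed_monomialsE)
  obtain xs g c where ys: "ys = xs @ [(g, c)]" using s(2) by (metis rev_exhaust surj_pair)
  have "s * t = monomial lm rm d (xs @ [(g, c * d')] @ zs)"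
    using s t ys by (simp add: monomial_snoc_mult)
  moreover have "set (xs @ [(g, c * d')] @ zs) \<subseteq> F0 \<times> A0"
    using s(3) t(3,4) ys A_subset_A0[OF assms(3)] by (auto intro: mult_in_A0)
  ultimately show ?thesis using s(4) unfolding headed_monomials_def by blast
qed

lemma AF_span_subset_span_headed:
  assumes "i \<in> I"
  shows "AF_span sF lm rm (A i) (F i) \<subseteq> F_vs.span (headed_monomials i)"
  unfolding AF_span_def headed_monomials_def
  using A_subset_A0[OF assms] F_subset_F0[OF assms] by (intro F_vs.span_mono) fast

lemma rm_span_left_factors:
  assumes "i \<in> I" "a \<in> A i" "\<phi> a = 0" "i' \<noteq> i" "L \<in> F_vs.span (left_factors i)"
  shows "rm L a \<in> F_vs.span (left_factors i')"
proof (rule F_vs.span_map_in_span[OF assms(5), of "\<lambda>L. rm L a"])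
  fix s
  assume "s \<in> left_factors i"
  then obtain xs g c where s: "s = monomial lm rm 1 (xs @ [(g, c)])" "set xs \<subseteq> F0 \<times> A0"
    "g \<in> F0" "c \<in> A0" "annihilates i c"
    by (rule left_factorsE)
  have "rm s a = monomial lm rm 1 (xs @ [(g, c * a)])"
    using s(1) by (simp add: rm_monomial_snoc)
  moreover have "c * a \<in> A0" using s(4) assms(1,2) A_subset_A0 by (blast intro: mult_in_A0)
  moreover have "annihilates i' (c * a)" using annihilates_mult s(5) assms(1-4) by blast
  ultimately have "rm s a \<in> left_factors i'"
    using s(2,3) unfolding left_factors_def by force
  then show "rm s a \<in> F_vs.span (left_factors i')" by (rule F_vs.span_base)
qed (simp_all add: rm_add_left rm_scale)

lemma mult_span_left_factors:
  assumes "i \<in> I" "i' \<noteq> i" "L \<in> F_vs.span (left_factors i)"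
    and "X \<in> AF_span sF lm rm (A i) (F i)"
  shows "L * X \<in> F_vs.span (left_factors i')"
proof (rule span_mult[OF assms(3) assms(4)[unfolded AF_span_def]])
  fix s t
  assume "s \<in> left_factors i"
  then obtain xs g c where s: "s = monomial lm rm 1 (xs @ [(g, c)])" "set xs \<subseteq> F0 \<times> A0"
    "g \<in> F0" "c \<in> A0"
    by (rule left_factorsE)
  assume "t \<in> {monomial lm rm d ys |d ys.
    ys \<noteq> [] \<and> d \<in> A i \<and> (\<forall>(f, a)\<in>set ys. f \<in> F i \<and> a \<in> A i)}"
  then obtain d ys where t: "t = monomial lm rm d ys" "ys \<noteq> []" "d \<in> A i"
    "set ys \<subseteq> F i \<times> A i"
    by fastforce
  have "s * t = monomial lm rm 1 (xs @ [(g, c * d)] @ ys)"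
    using s(1) t(1,2) by (simp add: monomial_snoc_mult)
  moreover have "set (xs @ [(g, c * d)] @ ys) \<subseteq> F0 \<times> A0"
    using s(2-4) t(3,4) A_subset_A0[OF assms(1)] F_subset_F0[OF assms(1)]
    by (auto intro: mult_in_A0)
  moreover have "snd (last ys) \<in> A i"
    using t(4) last_in_set[OF t(2)] by (auto simp: mem_Times_iff)
  then have "annihilates i' (snd (last ys))"
    using assms(1,2) by (intro annihilates_if_apart_from) (auto simp: apart_from_def)
  ultimately have "s * t \<in> left_factors i'"
    using t(2) unfolding left_factors_def by force
  then show "s * t \<in> F_vs.span (left_factors i')" by (rule F_vs.span_base)
qed

lemma Phi_rm_span_left_factors_eq_0:
  assumes "i \<in> I" "a \<in> A i" "\<phi> a = 0" "L \<in> F_vs.span (left_factors i)"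
  shows "\<Phi> (rm L a) = 0"
proof (rule F_vs.functional_eq_0_on_span[OF assms(4), of "\<lambda>L. \<Phi> (rm L a)"])
  fix s
  assume "s \<in> left_factors i"
  then obtain xs g c where s: "s = monomial lm rm 1 (xs @ [(g, c)])" "set xs \<subseteq> F0 \<times> A0"
    "g \<in> F0" "c \<in> A0" "annihilates i c"
    by (rule left_factorsE)
  have "\<phi> (c * a) = 0"
    using annihilates_phi_eq_0[OF s(5) assms(1-3), of 1] by (simp add: apart_from_def)
  moreover have "c * a \<in> A0" using s(4) assms(1,2) A_subset_A0 by (blast intro: mult_in_A0)
  ultimately show "\<Phi> (rm s a) = 0"
    using s(1-3) Phi_monomial_eq_0[of "xs @ [(g, c * a)]" "length xs"]
    by (simp add: rm_monomial_snoc)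
qed (simp_all add: rm_add_left rm_scale Phi_add Phi_scale)

lemma Phi_rm_span_left_factors_mult_eq_0:
  assumes "i \<in> I" "a \<in> A i" "\<phi> a = 0" "L \<in> F_vs.span (left_factors i)"
    and "i' \<in> I" "i' \<noteq> i" "R \<in> F_vs.span (headed_monomials i')"
  shows "\<Phi> (rm L a * R) = 0"
proof (rule F_vs.functional_eq_0_on_span[OF assms(4), of "\<lambda>L. \<Phi> (rm L a * R)"])
  fix s
  assume "s \<in> left_factors i"
  then obtain xs g c where s: "s = monomial lm rm 1 (xs @ [(g, c)])" "set xs \<subseteq> F0 \<times> A0"
    "g \<in> F0" "c \<in> A0" "annihilates i c"
    by (rule left_factorsE)
  show "\<Phi> (rm s a * R) = 0"
  proof (rule F_vs.functional_eq_0_on_span[OF assms(7), of "\<lambda>R. \<Phi> (rm s a * R)"])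
    fix t
    assume "t \<in> headed_monomials i'"
    then obtain d ys where t: "t = monomial lm rm d ys" "ys \<noteq> []" "set ys \<subseteq> F0 \<times> A0" "d \<in> A i'"
      by (rule headed_monomialsE)
    have "\<phi> (c * a * d) = 0"
      using annihilates_phi_eq_0[OF s(5) assms(1-3)] t(4) assms(5,6)
      by (auto simp: apart_from_def)
    moreover have "c * a * d \<in> A0"
      using s(4) t(4) assms(1,2,5) A_subset_A0 by (blast intro: mult_in_A0)
    ultimately show "\<Phi> (rm s a * t) = 0"
      using s(1-3) t(1-3) Phi_monomial_eq_0[of "xs @ [(g, c * a * d)] @ ys" "length xs"]
      by (simp add: rm_monomial_snoc monomial_snoc_mult)
  qed (simp_all add: distrib_left Phi_add sF_mult_right[symmetric] Phi_scale)
qed (simp_all add: rm_add_left rm_scale distrib_right Phi_add sF_mult_left[symmetric] Phi_scale)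

definition centered_in_B :: "'i \<Rightarrow> 'a \<times> 'f \<Rightarrow> bool" where
  "centered_in_B k b \<longleftrightarrow> k \<in> I \<and> fst b \<in> A k \<and> \<phi> (fst b) = 0 \<and>
     snd b \<in> AF_span sF lm rm (A k) (F k)"

lemma centered_in_B_indices: "list_all2 centered_in_B ks bs \<Longrightarrow> set ks \<subseteq> I"
  by (induction rule: list_all2_induct) (auto simp: centered_in_B_def)

lemma Bprod_F_parts_in_span_headed:
  assumes "list_all2 centered_in_B ks bs" "ks \<noteq> []"
  obtains f where "Bprod lm rm (map (\<lambda>b. (0, snd b)) bs) = (0, f)"
    "f \<in> F_vs.span (headed_monomials (hd ks))"
  using assms
proof (induction arbitrary: thesis rule: list_all2_induct)
  case Nil
  then show ?case by simp
next
  case (Cons k ks b bs)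
  have k: "k \<in> I" and f1: "snd b \<in> F_vs.span (headed_monomials k)"
    using Cons.hyps(1) AF_span_subset_span_headed by (auto simp: centered_in_B_def)
  show ?case
  proof (cases "ks = []")
    case True
    then show ?thesis
      using Cons.hyps(2) f1
      by (intro Cons.prems(1)) (simp_all add: Bprod_def Bone_def Bmult_def lm_zero_left rm_one)
  next
    case False
    then obtain f where f: "Bprod lm rm (map (\<lambda>b. (0, snd b)) bs) = (0, f)"
      "f \<in> F_vs.span (headed_monomials (hd ks))"
      using Cons.IH by blast
    have "hd ks \<in> I" using centered_in_B_indices[OF Cons.hyps(2)] False by auto
    then have "snd b * f \<in> F_vs.span (headed_monomials k)"
      using span_mult[OF f1 f(2)] headed_monomials_mult F_vs.span_base by blast
    then show ?thesis
      using f(1)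
      by (intro Cons.prems(1)) (simp_all add: Bprod_Cons Bmult_def lm_zero_left rm_zero_right)
  qed
qed

lemma Phi_rmul_B_rm_Bprod_F_parts_eq_0:
  assumes "i \<in> I" "a \<in> A i" "\<phi> a = 0" "L \<in> F_vs.span (left_factors i)"
    and "list_all2 centered_in_B ks bs" "ks \<noteq> [] \<longrightarrow> hd ks \<noteq> i"
  shows "\<Phi> (rmul_B (rm L a) (Bprod lm rm (map (\<lambda>b. (0, snd b)) bs))) = 0"
proof (cases "ks = []")
  case True
  then have "bs = []" using assms(5) by simp
  then show ?thesis
    using Phi_rm_span_left_factors_eq_0[OF assms(1-4)] by (simp add: Bprod_def rmul_B_Bone)
next
  case False
  obtain f where "Bprod lm rm (map (\<lambda>b. (0, snd b)) bs) = (0, f)"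
    "f \<in> F_vs.span (headed_monomials (hd ks))"
    using Bprod_F_parts_in_span_headed[OF assms(5) False] .
  moreover have "hd ks \<in> I" using centered_in_B_indices[OF assms(5)] False by auto
  ultimately show ?thesis
    using Phi_rm_span_left_factors_mult_eq_0[OF assms(1-4)] assms(6) False
    by (simp add: rmul_B_Pair rm_zero_right)
qed

lemma Phi_rmul_B_Bprod_eq_F_parts:
  assumes "list_all2 centered_in_B ks bs" "distinct_adj ks"
    and "ks \<noteq> [] \<longrightarrow> L \<in> F_vs.span (left_factors (hd ks))"
  shows "\<Phi> (rmul_B L (Bprod lm rm bs)) = \<Phi> (rmul_B L (Bprod lm rm (map (\<lambda>b. (0, snd b)) bs)))"
  using assms
proof (induction arbitrary: L rule: list_all2_induct)
  case Nil
  then show ?case by simp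
next
  case (Cons k ks b bs)
  obtain a f where b: "b = (a, f)" by (cases b)
  have k: "k \<in> I" "a \<in> A k" "\<phi> a = 0" "f \<in> AF_span sF lm rm (A k) (F k)"
    using Cons.hyps(1) by (simp_all add: b centered_in_B_def)
  have L: "L \<in> F_vs.span (left_factors k)" using Cons.prems(2) by simp
  have ks: "distinct_adj ks" "ks \<noteq> [] \<longrightarrow> hd ks \<noteq> k"
    using Cons.prems(1) by (auto simp: distinct_adj_Cons)
  have "ks \<noteq> [] \<longrightarrow> rm L a \<in> F_vs.span (left_factors (hd ks))"
    using ks(2) rm_span_left_factors[OF k(1-3) _ L] by blast
  note IH_rm = Cons.IH[OF ks(1) this]
  have "ks \<noteq> [] \<longrightarrow> L * f \<in> F_vs.span (left_factors (hd ks))"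
    using ks(2) mult_span_left_factors[OF k(1) _ L k(4)] by blast
  note IH_mult = Cons.IH[OF ks(1) this]
  let ?R = "Bprod lm rm bs"
  let ?Rf = "Bprod lm rm (map (\<lambda>b. (0, snd b)) bs)"
  have "\<Phi> (rmul_B L (Bprod lm rm (b # bs)))
      = \<Phi> (rmul_B (rm L a) ?R) + \<Phi> (rmul_B (L * f) ?R)"
    by (simp add: b Bprod_Cons rmul_B_Bmult rmul_B_Pair rmul_B_add Phi_add)
  also have "\<dots> = \<Phi> (rmul_B (rm L a) ?Rf) + \<Phi> (rmul_B (L * f) ?Rf)"
    by (simp only: IH_rm IH_mult)
  also have "\<Phi> (rmul_B (rm L a) ?Rf) = 0"
    using Phi_rmul_B_rm_Bprod_F_parts_eq_0[OF k(1-3) L Cons.hyps(2) ks(2)] .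
  also have "0 + \<Phi> (rmul_B (L * f) ?Rf)
      = \<Phi> (rmul_B L (Bprod lm rm (map (\<lambda>b. (0, snd b)) (b # bs))))"
    by (simp add: b Bprod_Cons rmul_B_Bmult rmul_B_Pair rm_zero_right)
  finally show ?case .
qed

end

theorem lemma4p7:
  fixes sA :: "complex \<Rightarrow> 'a::ring_1 \<Rightarrow> 'a"
    and sF :: "complex \<Rightarrow> 'f::ring \<Rightarrow> 'f"
    and \<phi> :: "'a \<Rightarrow> complex" and \<Phi> :: "'f \<Rightarrow> complex"
    and lm :: "'a \<Rightarrow> 'f \<Rightarrow> 'f" and rm :: "'f \<Rightarrow> 'a \<Rightarrow> 'f"
    and I :: "'i set" and A :: "'i \<Rightarrow> 'a set" and F :: "'i \<Rightarrow> 'f set"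
    and P :: 'f
  assumes ncps: "ncps_B' sA \<phi> sF lm rm \<Phi>"
    and subA: "\<And>i. i \<in> I \<Longrightarrow> unital_subalg sA (A i)"
    and subF: "\<And>i. i \<in> I \<Longrightarrow> subalg sF (F i)"
    and PhiP: "\<Phi> P \<noteq> 0"
    and free: "weakly_B'_free sA \<phi> sF lm rm \<Phi> I A (Some ` I \<union> {None})
                 (\<lambda>j. case j of Some i \<Rightarrow> F i | None \<Rightarrow> FP sF P)"
    and idx: "set is \<subseteq> I" "alternating is"
    and len: "length as = length is" "length Fs = length is"
    and mem_a: "\<And>j. j < length is \<Longrightarrow> as ! j \<in> A (is ! j)"
    and mem_F: "\<And>j. j < length is \<Longrightarrow> Fs ! j \<in> AF_span sF lm rm (A (is ! j)) (F (is ! j))"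
    and centered: "\<And>j. j < length is \<Longrightarrow> phiB \<phi> (as ! j, Fs ! j) = 0"
  shows "phiP rm \<Phi> P (Bprod lm rm (map2 Pair as Fs))
           = phiP rm \<Phi> P (Bprod lm rm (map (\<lambda>f. (0, f)) Fs))"
proof -
  let ?G = "\<lambda>j. case j of Some i \<Rightarrow> F i | None \<Rightarrow> FP sF P"
  interpret ncps_weakly_free sA sF \<phi> \<Phi> lm rm I A "Some ` I \<union> {None}" ?G F
  proof unfold_locales
    show "F i \<subseteq> gen_subalg sF (\<Union>j\<in>Some ` I \<union> {None}. ?G j)" if "i \<in> I" for i
      using that unfolding gen_subalg_def by force
  qed (fact ncps subA free)+
  have "P \<in> FP sF P"
    unfolding FP_def by (auto intro!: exI[of _ 1])
  then have P: "P \<in> left_factors (hd is)"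
    using G_subset_F0[of None] one_in_A0 annihilates_if_apart_from[of "hd is" 1]
    unfolding left_factors_def apart_from_def
    by (auto intro!: exI[of _ "[(P, 1)]"] simp: monomial_def lm_one rm_one)
  have bs: "list_all2 centered_in_B is (map2 Pair as Fs)"
    using len mem_a mem_F centered idx(1)
    by (auto simp: list_all2_conv_all_nth centered_in_B_def phiB_def)
  have "map (\<lambda>b. (0 :: 'a, snd b)) (map2 Pair as Fs) = map (Pair 0) (map snd (zip as Fs))"
    by simp
  also have "\<dots> = map (\<lambda>f. (0, f)) Fs"
    using len by simp
  finally show ?thesis
    using Phi_rmul_B_Bprod_eq_F_parts[OF bs] P idx(2) F_vs.span_base
    by (simp add: phiP_eq alternating_eq_distinct_adj)
qed

end
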